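(* Let $d\ge 1$, let $\Lambda$ be a $(d-2)$-dimensional simplicial complex with vertex set $[n]$, and let $\Gamma=0*\Lambda$ be the cone over $\Lambda$ with a new apex vertex $0$. Let $p':[n]\to\mathbb{R}^{d-1}$ be such that the coordinates $\{p'(s)_t:s\in[n],t\in[d-1]\}$ are algebraically independent over $\mathbb{Q}$, and set $\mathbb{F}'=\mathbb{Q}(p'(s)_t)$. Let $a_1,\dots,a_n\in\mathbb{R}$ be algebraically independent over $\mathbb{F}'$, and let $\mathbb{F}\subseteq\mathbb{R}$ be any field containing $\mathbb{F}'(a_1,\dots,a_n)$. Define $p:\{0,1,\dots,n\}\to\mathbb{F}^d$ by $p(0)=(0,\dots,0,-1)$ and $p(s)=((1+a_s)p'(s),a_s)$ for $s\in[n]$. Then for all $i\le\lfloor (d-1)/2\rfloor$ there exists an $\mathbb{F}'$-linear map $\psi_i:\mathcal{S}^a_i(\Lambda,p';\mathbb{F}')\to\mathcal{S}^a_i(\Gamma,p;\mathbb{F})$ such that for every $\omega'\in\mathcal{S}^a_i(\Lambda,p';\mathbb{F}')$, $\mathrm{supp}(\psi_i(\omega'))=\mathrm{skel}_{i-1}(0*\mathrm{supp}(\omega'))$.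
   Context: Simplicial complexes are nonempty families of subsets of a finite vertex set closed under subsets and containing all singletons; an $i$-face has $i+1$ elements. The cone $0*\Lambda=\{\sigma,\sigma\cup\{0\}:\sigma\in\Lambda\}$; $\mathrm{skel}_m(K)$ is the subcomplex of faces of dimension $\le m$. For a complex $K$ with vertex set $W$, a field $\mathbb{K}\subseteq\mathbb{R}$ and $r:W\to\mathbb{K}^e$ with $e-1=\dim K$, set $\theta_t=\sum_{v\in W}r(v)_tx_v$ for $t\in[e]$, and for a linear form $\ell=\sum_v\ell_vx_v$ let $\partial_\ell=\sum_v\ell_v\,\partial/\partial x_v$. A linear $i$-stress on $(K,r;\mathbb{K})$ is a homogeneous degree-$i$ polynomial $\lambda\in\mathbb{K}[x_v:v\in W]$ all of whose monomials with nonzero coefficient are supported on faces of $K$, with $\partial_{\theta_t}\lambda=0$ for all $t$; it is an affine $i$-stress if moreover $\partial_c\lambda=0$ where $c=\sum_{v\in W}x_v$. $\mathcal{S}^a_i(K,r;\mathbb{K})$ denotes the vector space of affine $i$-stresses. For a degree-$i$ stress $\lambda$ and an $(i-1)$-face $\sigma$, $\lambda_\sigma$ is the coefficient of $\prod_{v\in\sigma}x_v$, and $\mathrm{supp}(\lambda)$ is the subcomplex generated by the $(i-1)$-faces $\sigma$ with $\lambda_\sigma\ne0$. *)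

theory Defs
  imports Complex_Main "HOL-Library.Poly_Mapping"
begin

definition simplicial_complex :: "'v set \<Rightarrow> 'v set set \<Rightarrow> bool" where
  "simplicial_complex W K \<longleftrightarrow> finite W \<and> K \<noteq> {} \<and> (\<forall>\<sigma>\<in>K. \<sigma> \<subseteq> W)
     \<and> (\<forall>\<sigma>\<in>K. \<forall>\<tau>. \<tau> \<subseteq> \<sigma> \<longrightarrow> \<tau> \<in> K) \<and> (\<forall>v\<in>W. {v} \<in> K)"

definition dim_eq :: "'v set set \<Rightarrow> int \<Rightarrow> bool" where
  "dim_eq K m \<longleftrightarrow> (\<forall>\<sigma>\<in>K. int (card \<sigma>) \<le> m + 1) \<and> (\<exists>\<sigma>\<in>K. int (card \<sigma>) = m + 1)"

definition cone :: "'v \<Rightarrow> 'v set set \<Rightarrow> 'v set set" where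
  "cone a L = {\<sigma>. \<sigma> \<in> L} \<union> {insert a \<sigma> | \<sigma>. \<sigma> \<in> L}"

(* faces with at most k elements, i.e. skel_{k-1} *)
definition skel_card :: "nat \<Rightarrow> 'v set set \<Rightarrow> 'v set set" where
  "skel_card k K = {\<sigma> \<in> K. card \<sigma> \<le> k}"

definition is_subfield :: "real set \<Rightarrow> bool" where
  "is_subfield F \<longleftrightarrow> 0 \<in> F \<and> 1 \<in> F \<and> (\<forall>x\<in>F. \<forall>y\<in>F. x + y \<in> F \<and> x * y \<in> F)
     \<and> (\<forall>x\<in>F. - x \<in> F \<and> inverse x \<in> F)"

definition gen_field :: "real set \<Rightarrow> real set" where
  "gen_field S = \<Inter>{F. is_subfield F \<and> S \<subseteq> F}"

(* polynomials in variables indexed by 'i: coefficient functions on monomials *)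
type_synonym 'i monomial = "'i \<Rightarrow>\<^sub>0 nat"

definition mdeg :: "'i monomial \<Rightarrow> nat" where
  "mdeg m = (\<Sum>v\<in>Poly_Mapping.keys m. Poly_Mapping.lookup m v)"

definition mpoly_eval :: "('i monomial \<Rightarrow> real) \<Rightarrow> ('i \<Rightarrow> real) \<Rightarrow> real" where
  "mpoly_eval c x = (\<Sum>m\<in>{m. c m \<noteq> 0}. c m * (\<Prod>j\<in>Poly_Mapping.keys m. x j ^ Poly_Mapping.lookup m j))"

definition alg_indep :: "real set \<Rightarrow> 'i set \<Rightarrow> ('i \<Rightarrow> real) \<Rightarrow> bool" where
  "alg_indep F I x \<longleftrightarrow> (\<forall>c::'i monomial \<Rightarrow> real.
      finite {m. c m \<noteq> 0} \<and> (\<forall>m. c m \<in> F) \<and> (\<forall>m. c m \<noteq> 0 \<longrightarrow> Poly_Mapping.keys m \<subseteq> I)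
      \<and> mpoly_eval c x = 0 \<longrightarrow> (\<forall>m. c m = 0))"

(* directional derivative \<partial>_\<ell> of a polynomial in variables W *)
definition dderiv :: "'v set \<Rightarrow> ('v \<Rightarrow> real) \<Rightarrow> ('v monomial \<Rightarrow> real) \<Rightarrow> ('v monomial \<Rightarrow> real)" where
  "dderiv W l lam = (\<lambda>m. \<Sum>v\<in>W. l v * (of_nat (Poly_Mapping.lookup m v) + 1) * lam (m + Poly_Mapping.single v 1))"

(* linear i-stress on (K, r; k), r : W \<rightarrow> k^e given as r v t for t \<in> {1..e} *)
definition linear_stress ::
  "'v set \<Rightarrow> 'v set set \<Rightarrow> nat \<Rightarrow> ('v \<Rightarrow> nat \<Rightarrow> real) \<Rightarrow> real set \<Rightarrow> nat \<Rightarrow> ('v monomial \<Rightarrow> real) \<Rightarrow> bool" where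
  "linear_stress W K e r k i lam \<longleftrightarrow>
     (\<forall>m. lam m \<in> k) \<and>
     (\<forall>m. lam m \<noteq> 0 \<longrightarrow> mdeg m = i \<and> Poly_Mapping.keys m \<in> K) \<and>
     (\<forall>t\<in>{1..e}. dderiv W (\<lambda>v. r v t) lam = (\<lambda>m. 0))"

definition affine_stress ::
  "'v set \<Rightarrow> 'v set set \<Rightarrow> nat \<Rightarrow> ('v \<Rightarrow> nat \<Rightarrow> real) \<Rightarrow> real set \<Rightarrow> nat \<Rightarrow> ('v monomial \<Rightarrow> real) \<Rightarrow> bool" where
  "affine_stress W K e r k i lam \<longleftrightarrow>
     linear_stress W K e r k i lam \<and> dderiv W (\<lambda>v. 1) lam = (\<lambda>m. 0)"

definition affine_stresses ::
  "'v set \<Rightarrow> 'v set set \<Rightarrow> nat \<Rightarrow> ('v \<Rightarrow> nat \<Rightarrow> real) \<Rightarrow> real set \<Rightarrow> nat \<Rightarrow> ('v monomial \<Rightarrow> real) set" where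
  "affine_stresses W K e r k i = {lam. affine_stress W K e r k i lam}"

definition sqfree :: "'v set \<Rightarrow> 'v monomial" where
  "sqfree \<sigma> = (\<Sum>v\<in>\<sigma>. Poly_Mapping.single v 1)"

definition supp :: "nat \<Rightarrow> ('v monomial \<Rightarrow> real) \<Rightarrow> 'v set set" where
  "supp i lam = {\<tau>. \<exists>\<sigma>. finite \<sigma> \<and> card \<sigma> = i \<and> lam (sqfree \<sigma>) \<noteq> 0 \<and> \<tau> \<subseteq> \<sigma>}"

end

theory Submission
  imports Defs "Jordan_Normal_Form.Determinant"
begin

(* Write b_s = 1/(1+a_s) and D = \<partial>_b. The map is \<psi>(\<omega>) = exp(-x_0 D) \<omega>, followed by
   the substitution x_s := b_s x_s. Since p(s) - p(0) = (1+a_s) (p'(s), 1), this substitution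
   turns \<partial>_{p_t} into \<partial>_{p'_t} (into \<partial>_c for t = d), which commutes with D and kills \<omega>;
   the exponential makes the apex terms cancel. So \<psi>(\<omega>) is an affine stress.
   On squarefree monomials \<psi>(\<omega>) agrees with \<omega> away from the apex, and the coefficient
   of x_0 x_\<rho> is, up to a nonzero factor, (D\<omega>)_\<rho> = \<Sum>_v b_v \<omega>_{\<rho>+v}. The b_v are
   linearly independent over F', so this vanishes only if all \<omega>_{\<rho>+v} vanish; for v \<notin> \<rho>
   that means \<rho> lies in no (i-1)-face of supp \<omega>, and then the stress equations make the
   remaining coefficients an affine dependence among the |\<rho>| \<le> d generic points p'(v),
   v \<in> \<rho>, hence zero. *)

lemma is_subfield_gen_field: "is_subfield (gen_field S)"
  unfolding gen_field_def is_subfield_def by blast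

lemma subset_gen_field: "S \<subseteq> gen_field S"
  unfolding gen_field_def by blast

lemma gen_field_least: "is_subfield F \<Longrightarrow> S \<subseteq> F \<Longrightarrow> gen_field S \<subseteq> F"
  unfolding gen_field_def by blast

context
  fixes F :: "real set"
  assumes F: "is_subfield F"
begin

lemma subfield_zero: "0 \<in> F"
  using F unfolding is_subfield_def by blast

lemma subfield_one: "1 \<in> F"
  using F unfolding is_subfield_def by blast

lemma subfield_add: "x \<in> F \<Longrightarrow> y \<in> F \<Longrightarrow> x + y \<in> F"
  using F unfolding is_subfield_def by blast

lemma subfield_mult: "x \<in> F \<Longrightarrow> y \<in> F \<Longrightarrow> x * y \<in> F"
  using F unfolding is_subfield_def by blast

lemma subfield_uminus: "x \<in> F \<Longrightarrow> - x \<in> F"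
  using F unfolding is_subfield_def by blast

lemma subfield_inverse: "x \<in> F \<Longrightarrow> inverse x \<in> F"
  using F unfolding is_subfield_def by blast

lemma subfield_divide: "x \<in> F \<Longrightarrow> y \<in> F \<Longrightarrow> x / y \<in> F"
  by (simp add: divide_inverse subfield_mult subfield_inverse)

lemma subfield_sum: "(\<And>x. x \<in> A \<Longrightarrow> f x \<in> F) \<Longrightarrow> sum f A \<in> F"
  by (induction A rule: infinite_finite_induct) (auto simp: subfield_zero subfield_add)

lemma subfield_prod: "(\<And>x. x \<in> A \<Longrightarrow> f x \<in> F) \<Longrightarrow> prod f A \<in> F"
  by (induction A rule: infinite_finite_induct) (auto simp: subfield_one subfield_mult)

lemma subfield_power: "x \<in> F \<Longrightarrow> x ^ k \<in> F"
  by (induction k) (auto simp: subfield_one subfield_mult)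

lemma subfield_of_nat: "of_nat k \<in> F"
  by (induction k) (auto simp: subfield_zero subfield_one subfield_add)

end

lemma lookup_sqfree: "finite A \<Longrightarrow> Poly_Mapping.lookup (sqfree A) v = (if v \<in> A then 1 else 0)"
  by (simp add: sqfree_def lookup_sum lookup_single when_def)

lemma keys_sqfree: "finite A \<Longrightarrow> Poly_Mapping.keys (sqfree A) = A"
  by (auto simp: in_keys_iff lookup_sqfree split: if_splits)

lemma sqfree_insert:
  "finite A \<Longrightarrow> v \<notin> A \<Longrightarrow> sqfree (insert v A) = sqfree A + Poly_Mapping.single v 1"
  by (simp add: sqfree_def add.commute)

lemma keys_add_single:
  "Poly_Mapping.keys (m + Poly_Mapping.single v (1::nat)) = insert v (Poly_Mapping.keys m)"
  by (auto simp: in_keys_iff lookup_add lookup_single when_def split: if_splits)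

lemma mdeg_eq_sum:
  "finite K \<Longrightarrow> Poly_Mapping.keys m \<subseteq> K \<Longrightarrow> mdeg m = (\<Sum>v\<in>K. Poly_Mapping.lookup m v)"
  unfolding mdeg_def by (rule sum.mono_neutral_left) (auto simp: in_keys_iff)

lemma mdeg_add: "mdeg (m + m') = mdeg m + mdeg m'"
proof -
  let ?K = "Poly_Mapping.keys m \<union> Poly_Mapping.keys m'"
  have "mdeg (m + m') = (\<Sum>v\<in>?K. Poly_Mapping.lookup (m + m') v)"
    using keys_add[of m m'] by (intro mdeg_eq_sum) auto
  also have "\<dots> = mdeg m + mdeg m'"
    using mdeg_eq_sum[of ?K m] mdeg_eq_sum[of ?K m'] by (simp add: lookup_add sum.distrib)
  finally show ?thesis .
qed

lemma mdeg_single: "mdeg (Poly_Mapping.single v k) = k"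
  by (simp add: mdeg_def)

section \<open>Algebraic independence\<close>

lemma mpoly_eval_multilinear:
  assumes "finite AA" and "\<forall>A\<in>AA. finite A"
  shows "mpoly_eval (\<lambda>m. if m \<in> sqfree ` AA then f (Poly_Mapping.keys m) else 0) x
      = (\<Sum>A\<in>AA. f A * (\<Prod>r\<in>A. x r))"
proof -
  let ?c = "\<lambda>m. if m \<in> sqfree ` AA then f (Poly_Mapping.keys m) else 0"
  let ?B = "{A\<in>AA. f A \<noteq> 0}"
  have inj: "inj_on sqfree AA"
    using assms(2) by (metis inj_onI keys_sqfree)
  have "{m. ?c m \<noteq> 0} = sqfree ` ?B"
    using assms(2) by (auto simp: keys_sqfree) (metis keys_sqfree)
  then have "mpoly_eval ?c x = (\<Sum>A\<in>?B. ?c (sqfree A) *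
      (\<Prod>j\<in>Poly_Mapping.keys (sqfree A). x j ^ Poly_Mapping.lookup (sqfree A) j))"
    unfolding mpoly_eval_def by (simp add: sum.reindex inj_on_subset[OF inj])
  also have "\<dots> = (\<Sum>A\<in>?B. f A * (\<Prod>r\<in>A. x r))"
    using assms(2) by (intro sum.cong) (auto simp: keys_sqfree lookup_sqfree)
  also have "\<dots> = (\<Sum>A\<in>AA. f A * (\<Prod>r\<in>A. x r))"
    using assms(1) by (intro sum.mono_neutral_left) auto
  finally show ?thesis .
qed

lemma alg_indep_multilinear:
  assumes ai: "alg_indep F I x" and "0 \<in> F" and "finite AA"
    and AA: "\<forall>A\<in>AA. finite A \<and> A \<subseteq> I" and "\<forall>A\<in>AA. f A \<in> F"
    and "(\<Sum>A\<in>AA. f A * (\<Prod>r\<in>A. x r)) = 0"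
  shows "\<forall>A\<in>AA. f A = 0"
proof -
  let ?c = "\<lambda>m. if m \<in> sqfree ` AA then f (Poly_Mapping.keys m) else 0"
  have "finite {m. ?c m \<noteq> 0}"
    using \<open>finite AA\<close> by (auto intro: finite_subset[of _ "sqfree ` AA"])
  moreover have "\<forall>m. ?c m \<in> F"
    using assms(2,4,5) by (auto simp: keys_sqfree)
  moreover have "\<forall>m. ?c m \<noteq> 0 \<longrightarrow> Poly_Mapping.keys m \<subseteq> I"
  proof (intro allI impI)
    fix m assume "?c m \<noteq> 0"
    then obtain A where "A \<in> AA" "m = sqfree A"
      by (auto split: if_splits)
    then show "Poly_Mapping.keys m \<subseteq> I"
      using AA by (simp add: keys_sqfree)
  qed
  moreover have "mpoly_eval ?c x = 0"
    using assms(3,4,6) by (simp add: mpoly_eval_multilinear)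
  ultimately have "\<forall>m. ?c m = 0"
    by (intro ai[unfolded alg_indep_def, THEN spec, THEN mp] conjI)
  then show ?thesis
    using AA by (metis image_eqI keys_sqfree)
qed

lemma prod_one_plus_eq_sum_Pow:
  fixes x :: "'a \<Rightarrow> 'b::comm_semiring_1"
  shows "finite N \<Longrightarrow> (\<Prod>r\<in>N. 1 + x r) = (\<Sum>A\<in>Pow N. \<Prod>r\<in>A. x r)"
  using prod_add[of N x "\<lambda>_. 1"] by (simp add: add.commute)

lemma prod_one_plus_nonzero:
  assumes "alg_indep F N a" and "is_subfield F" and "finite N"
  shows "(\<Prod>r\<in>N. 1 + a r) \<noteq> 0"
proof
  assume "(\<Prod>r\<in>N. 1 + a r) = 0"
  then have rel: "(\<Sum>A\<in>Pow N. 1 * (\<Prod>r\<in>A. a r)) = 0"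
    using assms(3) by (simp add: prod_one_plus_eq_sum_Pow)
  have "\<forall>A\<in>Pow N. (1::real) = 0"
    using assms(3) subfield_one[OF assms(2)]
    by (intro alg_indep_multilinear[OF assms(1) subfield_zero[OF assms(2)] _ _ _ rel])
      (auto intro: finite_subset)
  then show False
    by auto
qed

(* Clearing denominators gives the multilinear relation \<Sum>_A (\<Sum>_{v \<in> N-A} c_v) a^A = 0,
   whose coefficient at A = N - {v} is c_v. *)
lemma lin_indep_inverse_one_plus:
  assumes ai: "alg_indep F N a" and F: "is_subfield F" and fin: "finite N"
    and cF: "\<forall>v\<in>N. c v \<in> F" and rel: "(\<Sum>v\<in>N. c v * inverse (1 + a v)) = 0"
  shows "\<forall>v\<in>N. c v = 0"
proof -
  let ?P = "\<lambda>A. \<Prod>r\<in>A. 1 + a r"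
  have nz: "1 + a r \<noteq> 0" if "r \<in> N" for r
    using prod_one_plus_nonzero[OF ai F fin] fin that by auto
  have "0 = ?P N * (\<Sum>v\<in>N. c v * inverse (1 + a v))"
    using rel by simp
  also have "\<dots> = (\<Sum>v\<in>N. c v * ?P (N - {v}))"
    unfolding sum_distrib_left using nz fin by (intro sum.cong) (simp_all add: prod.remove field_simps)
  also have "\<dots> = (\<Sum>v\<in>N. \<Sum>A\<in>{A. A \<in> Pow N \<and> v \<notin> A}. c v * (\<Prod>r\<in>A. a r))"
  proof (intro sum.cong refl)
    fix v
    have "{A. A \<in> Pow N \<and> v \<notin> A} = Pow (N - {v})"
      by auto
    then show "c v * ?P (N - {v}) = (\<Sum>A\<in>{A. A \<in> Pow N \<and> v \<notin> A}. c v * (\<Prod>r\<in>A. a r))"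
      using fin by (simp add: prod_one_plus_eq_sum_Pow sum_distrib_left)
  qed
  also have "\<dots> = (\<Sum>A\<in>Pow N. \<Sum>v\<in>{v. v \<in> N \<and> v \<notin> A}. c v * (\<Prod>r\<in>A. a r))"
    using fin by (intro sum.swap_restrict) auto
  also have "\<dots> = (\<Sum>A\<in>Pow N. (\<Sum>v\<in>N - A. c v) * (\<Prod>r\<in>A. a r))"
    by (simp add: sum_distrib_right set_diff_eq)
  finally have coeffs: "\<forall>A\<in>Pow N. (\<Sum>v\<in>N - A. c v) = 0"
    using alg_indep_multilinear[OF ai subfield_zero[OF F], of "Pow N" "\<lambda>A. \<Sum>v\<in>N - A. c v"] fin cF
    by (auto intro: finite_subset subfield_sum[OF F])
  show ?thesis
  proof
    fix v assume "v \<in> N"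
    have "(\<Sum>u\<in>N - (N - {v}). c u) = 0"
      using coeffs[rule_format, of "N - {v}"] by simp
    moreover have "N - (N - {v}) = {v}"
      using \<open>v \<in> N\<close> by auto
    ultimately show "c v = 0"
      by simp
  qed
qed

lemma alg_indep_sum_prod_nonzero:
  fixes x :: "'i \<Rightarrow> real" and E :: "'p \<Rightarrow> 'i set"
  assumes ai: "alg_indep \<rat> I x" and "finite P"
    and E: "\<forall>\<pi>\<in>P. finite (E \<pi>) \<and> E \<pi> \<subseteq> I"
    and "\<pi>\<^sub>0 \<in> P" and unique: "\<forall>\<pi>\<in>P. E \<pi> = E \<pi>\<^sub>0 \<longrightarrow> \<pi> = \<pi>\<^sub>0"
    and "\<forall>\<pi>\<in>P. s \<pi> \<in> \<rat>" and "s \<pi>\<^sub>0 \<noteq> 0"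
  shows "(\<Sum>\<pi>\<in>P. s \<pi> * (\<Prod>r\<in>E \<pi>. x r)) \<noteq> 0"
proof
  define f where "f B = (\<Sum>\<pi>\<in>{\<pi>\<in>P. E \<pi> = B}. s \<pi>)" for B
  assume "(\<Sum>\<pi>\<in>P. s \<pi> * (\<Prod>r\<in>E \<pi>. x r)) = 0"
  moreover have "(\<Sum>\<pi>\<in>P. s \<pi> * (\<Prod>r\<in>E \<pi>. x r)) = (\<Sum>B\<in>E ` P. f B * (\<Prod>r\<in>B. x r))"
    unfolding sum.image_gen[OF \<open>finite P\<close>, of _ E] f_def sum_distrib_right by (intro sum.cong) auto
  ultimately have "\<forall>B\<in>E ` P. f B = 0"
    using \<open>finite P\<close> E assms(6) by (intro alg_indep_multilinear[OF ai Rats_0]) (auto simp: f_def)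
  moreover have "{\<pi>\<in>P. E \<pi> = E \<pi>\<^sub>0} = {\<pi>\<^sub>0}"
    using unique \<open>\<pi>\<^sub>0 \<in> P\<close> by blast
  ultimately show False
    using \<open>\<pi>\<^sub>0 \<in> P\<close> \<open>s \<pi>\<^sub>0 \<noteq> 0\<close> unfolding f_def by auto
qed

lemma permutes_eq_id_if_fixes_all_but_one:
  assumes "\<pi> permutes S" and "\<And>x. x \<in> S - {a} \<Longrightarrow> \<pi> x = x"
  shows "\<pi> = id"
proof -
  have "\<pi> permutes {a}"
    using permutes_superset[OF assms] .
  then show ?thesis
    by (simp only: permutes_sing)
qed

section \<open>Affine independence of generic points\<close>

(* The determinant is a polynomial in the coordinates q whose monomial from the
   identity permutation arises from no other permutation. *)
lemma det_generic_affine_matrix_nonzero: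
  fixes q :: "'i \<Rightarrow> nat \<Rightarrow> real"
  assumes ai: "alg_indep \<rat> (I \<times> {1..e}) (\<lambda>(s, t). q s t)"
    and h: "inj_on h {0..<k}" "h ` {0..<k} \<subseteq> I" and k: "k \<le> e + 1"
  shows "det (mat k k (\<lambda>(j, l). if j = 0 then 1 else q (h l) j)) \<noteq> 0"
proof -
  define A :: "real mat" where "A = mat k k (\<lambda>(j, l). if j = 0 then 1 else q (h l) j)"
  define P where "P = {\<pi>. \<pi> permutes {0..<k}}"
  define E where "E = (\<lambda>\<pi>. (\<lambda>j. (h (\<pi> j), j)) ` {1..<k})"
  have perm_lt: "\<pi> j < k" if "\<pi> \<in> P" "j < k" for \<pi> j
    using that permutes_in_image[of \<pi> "{0..<k}" j] unfolding P_def by auto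
  have diagonal: "(\<Prod>j = 0..<k. A $$ (j, \<pi> j)) = (\<Prod>(s, t)\<in>E \<pi>. q s t)" if "\<pi> \<in> P" for \<pi>
  proof -
    have "(\<Prod>j = 0..<k. A $$ (j, \<pi> j)) = (\<Prod>j = 1..<k. q (h (\<pi> j)) j)"
      using perm_lt[OF that] by (intro prod.mono_neutral_cong_right) (auto simp: A_def)
    also have "\<dots> = (\<Prod>(s, t)\<in>E \<pi>. q s t)"
      unfolding E_def by (subst prod.reindex) (auto simp: inj_on_def)
    finally show ?thesis .
  qed
  have only_id: "\<pi> = id" if "\<pi> \<in> P" "E \<pi> = E id" for \<pi>
  proof (rule permutes_eq_id_if_fixes_all_but_one)
    show "\<pi> permutes {0..<k}"
      using \<open>\<pi> \<in> P\<close> unfolding P_def by simp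
    fix j assume j: "j \<in> {0..<k} - {0}"
    then have "(h (\<pi> j), j) \<in> E \<pi>"
      unfolding E_def by auto
    then have "(h (\<pi> j), j) \<in> E id"
      using \<open>E \<pi> = E id\<close> by simp
    then have "h (\<pi> j) = h j"
      unfolding E_def by auto
    then show "\<pi> j = j"
      using inj_onD[OF h(1)] perm_lt[OF \<open>\<pi> \<in> P\<close>] j by simp
  qed
  have vars: "finite (E \<pi>) \<and> E \<pi> \<subseteq> I \<times> {1..e}" if "\<pi> \<in> P" for \<pi>
    using h(2) perm_lt[OF that] k unfolding E_def by auto
  have "det A = (\<Sum>\<pi>\<in>P. signof \<pi> * (\<Prod>j = 0..<k. A $$ (j, \<pi> j)))"
    unfolding det_def P_def by (simp add: A_def)
  also have "\<dots> = (\<Sum>\<pi>\<in>P. signof \<pi> * (\<Prod>(s, t)\<in>E \<pi>. q s t))"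
    using diagonal by (intro sum.cong) simp_all
  finally have "det A = (\<Sum>\<pi>\<in>P. signof \<pi> * (\<Prod>(s, t)\<in>E \<pi>. q s t))" .
  moreover have "(\<Sum>\<pi>\<in>P. signof \<pi> * (\<Prod>(s, t)\<in>E \<pi>. q s t)) \<noteq> (0::real)"
    using vars only_id
    by (intro alg_indep_sum_prod_nonzero[OF ai]) (auto simp: P_def finite_permutations permutes_id)
  ultimately show ?thesis
    unfolding A_def by simp
qed

lemma affine_indep_generic:
  fixes q :: "'i \<Rightarrow> nat \<Rightarrow> real"
  assumes ai: "alg_indep \<rat> (I \<times> {1..e}) (\<lambda>(s, t). q s t)"
    and \<tau>: "finite \<tau>" "\<tau> \<subseteq> I" "card \<tau> \<le> e + 1"
    and sum0: "(\<Sum>v\<in>\<tau>. c v) = 0" and sum_coord: "\<forall>t\<in>{1..e}. (\<Sum>v\<in>\<tau>. c v * q v t) = 0"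
  shows "\<forall>v\<in>\<tau>. c v = 0"
proof -
  obtain h where h: "bij_betw h {0..<card \<tau>} \<tau>"
    using ex_bij_betw_nat_finite[OF \<tau>(1)] by blast
  let ?k = "card \<tau>"
  define A :: "real mat" where "A = mat ?k ?k (\<lambda>(j, l). if j = 0 then 1 else q (h l) j)"
  define cv where "cv = vec ?k (\<lambda>l. c (h l))"
  have A: "A \<in> carrier_mat ?k ?k"
    unfolding A_def by simp
  have "det A \<noteq> 0"
    unfolding A_def using h \<tau>
    by (intro det_generic_affine_matrix_nonzero[OF ai]) (auto simp: bij_betw_def)
  moreover have "A *\<^sub>v cv = 0\<^sub>v ?k"
  proof (rule eq_vecI)
    fix j assume "j < dim_vec (0\<^sub>v ?k :: real vec)"
    then have j: "j < ?k" by simp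
    have "(A *\<^sub>v cv) $ j = (\<Sum>l = 0..<?k. (if j = 0 then 1 else q (h l) j) * c (h l))"
      using j by (simp add: A_def cv_def scalar_prod_def)
    also have "\<dots> = (\<Sum>v\<in>\<tau>. (if j = 0 then 1 else q v j) * c v)"
      using sum.reindex_bij_betw[OF h] by simp
    also have "\<dots> = 0"
    proof (cases "j = 0")
      case False
      then have "j \<in> {1..e}"
        using j \<tau>(3) by auto
      then show ?thesis
        using False sum_coord by (simp add: mult.commute)
    qed (simp add: sum0)
    finally show "(A *\<^sub>v cv) $ j = 0\<^sub>v ?k $ j"
      using j by simp
  qed (simp add: A_def)
  moreover have "cv \<in> carrier_vec ?k"
    unfolding cv_def by simp
  ultimately have "cv = 0\<^sub>v ?k"
    using det_0_iff_vec_prod_zero_field[OF A] by blast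
  then have "c (h l) = 0" if "l < ?k" for l
    using that unfolding cv_def by (metis index_vec index_zero_vec(1))
  moreover have "h ` {0..<?k} = \<tau>"
    using h by (simp add: bij_betw_def)
  ultimately show ?thesis
    by (metis atLeastLessThan_iff imageE)
qed

lemma dderiv_add: "dderiv W l (\<lambda>m. f m + g m) = (\<lambda>m. dderiv W l f m + dderiv W l g m)"
  unfolding dderiv_def by (simp add: distrib_left sum.distrib)

lemma dderiv_cmult: "dderiv W l (\<lambda>m. c * f m) = (\<lambda>m. c * dderiv W l f m)"
  unfolding dderiv_def by (simp add: sum_distrib_left mult_ac)

lemma dderiv_zero: "dderiv W l (\<lambda>m. 0) = (\<lambda>m. 0)"
  unfolding dderiv_def by simp

lemma dderiv_cong: "(\<And>v. v \<in> W \<Longrightarrow> l v = l' v) \<Longrightarrow> dderiv W l = dderiv W l'"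
  unfolding dderiv_def by (intro ext sum.cong) auto

lemma funpow_dderiv_add:
  "(dderiv W l ^^ k) (\<lambda>m. f m + g m) = (\<lambda>m. (dderiv W l ^^ k) f m + (dderiv W l ^^ k) g m)"
  by (induction k) (simp_all add: dderiv_add)

lemma funpow_dderiv_cmult: "(dderiv W l ^^ k) (\<lambda>m. c * f m) = (\<lambda>m. c * (dderiv W l ^^ k) f m)"
  by (induction k) (simp_all add: dderiv_cmult)

lemma dderiv_commute: "dderiv W l (dderiv W l' f) = dderiv W l' (dderiv W l f)"
proof (rule ext)
  fix m
  let ?e = "\<lambda>v. Poly_Mapping.single v (1::nat)"
  let ?t = "\<lambda>l l' v u. l v * (of_nat (Poly_Mapping.lookup m v) + 1) *
      (l' u * (of_nat (Poly_Mapping.lookup (m + ?e v) u) + 1) * f (m + ?e v + ?e u))"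
  have sym: "?t l l' v u = ?t l' l u v" for u v
    by (cases "u = v") (simp_all add: lookup_add lookup_single add_ac mult_ac)
  have "dderiv W l (dderiv W l' f) m = (\<Sum>v\<in>W. \<Sum>u\<in>W. ?t l l' v u)"
    unfolding dderiv_def by (simp add: sum_distrib_left)
  also have "\<dots> = (\<Sum>u\<in>W. \<Sum>v\<in>W. ?t l' l u v)"
    by (subst sum.swap) (simp only: sym)
  also have "\<dots> = dderiv W l' (dderiv W l f) m"
    unfolding dderiv_def by (simp add: sum_distrib_left)
  finally show "dderiv W l (dderiv W l' f) m = dderiv W l' (dderiv W l f) m" .
qed

lemma dderiv_funpow_eq_0:
  assumes "dderiv W l' f = (\<lambda>m. 0)"
  shows "dderiv W l' ((dderiv W l ^^ k) f) = (\<lambda>m. 0)"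
  using assms by (induction k) (simp_all add: dderiv_commute dderiv_zero)

lemma funpow_dderiv_in_subfield:
  assumes F: "is_subfield F" and "\<forall>v\<in>W. l v \<in> F" and "\<forall>m. f m \<in> F"
  shows "(dderiv W l ^^ k) f m \<in> F"
  using assms(3)
proof (induction k arbitrary: m)
  case (Suc k)
  then show ?case
    using assms(2) unfolding funpow.simps comp_def dderiv_def
    by (intro subfield_sum[OF F] subfield_mult[OF F] subfield_add[OF F] subfield_of_nat[OF F]
        subfield_one[OF F]) auto
qed simp

lemma funpow_dderiv_support:
  assumes f: "\<forall>m. f m \<noteq> 0 \<longrightarrow> mdeg m = j \<and> Poly_Mapping.keys m \<in> K"
    and down: "\<forall>\<sigma>\<in>K. \<forall>\<tau>. \<tau> \<subseteq> \<sigma> \<longrightarrow> \<tau> \<in> K"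
    and nz: "(dderiv W l ^^ k) f m \<noteq> 0"
  shows "mdeg m + k = j \<and> Poly_Mapping.keys m \<in> K"
  using nz
proof (induction k arbitrary: m)
  case (Suc k)
  have "dderiv W l ((dderiv W l ^^ k) f) m \<noteq> 0"
    using Suc.prems by simp
  then obtain v where "(dderiv W l ^^ k) f (m + Poly_Mapping.single v 1) \<noteq> 0"
    unfolding dderiv_def by (metis (no_types, lifting) mult_zero_right sum.neutral)
  then have "mdeg (m + Poly_Mapping.single v 1) + k = j \<and> Poly_Mapping.keys (m + Poly_Mapping.single v 1) \<in> K"
    using Suc.IH by blast
  then have "mdeg m + 1 + k = j" "insert v (Poly_Mapping.keys m) \<in> K"
    unfolding mdeg_add mdeg_single keys_add_single by simp_all
  then show ?case
    using down by (simp add: subset_insertI)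
qed (use f in simp)

section \<open>The coning map\<close>

definition drop_apex :: "nat monomial \<Rightarrow> nat monomial" where
  "drop_apex m = m - Poly_Mapping.single 0 (Poly_Mapping.lookup m 0)"

definition inv_one_plus :: "(nat \<Rightarrow> real) \<Rightarrow> nat \<Rightarrow> real" where
  "inv_one_plus a v = inverse (1 + a v)"

definition monomial_weight :: "nat \<Rightarrow> (nat \<Rightarrow> real) \<Rightarrow> nat monomial \<Rightarrow> real" where
  "monomial_weight n a m = (\<Prod>s\<in>{1..n}. inv_one_plus a s ^ Poly_Mapping.lookup m s)"

(* The coefficients of exp(-x_0 D) \<omega> after the substitution x_s := x_s/(1+a_s),
   with D the derivative along inv_one_plus a. *)
definition cone_stress :: "nat \<Rightarrow> (nat \<Rightarrow> real) \<Rightarrow> (nat monomial \<Rightarrow> real) \<Rightarrow> nat monomial \<Rightarrow> real" where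
  "cone_stress n a \<omega> m = (let k = Poly_Mapping.lookup m 0 in
     ((-1) ^ k / fact k) * (dderiv {1..n} (inv_one_plus a) ^^ k) \<omega> (drop_apex m) * monomial_weight n a m)"

lemma lookup_drop_apex:
  "Poly_Mapping.lookup (drop_apex m) v = (if v = 0 then 0 else Poly_Mapping.lookup m v)"
  by (simp add: drop_apex_def lookup_minus lookup_single when_def)

lemma keys_drop_apex: "Poly_Mapping.keys (drop_apex m) = Poly_Mapping.keys m - {0}"
  by (auto simp: in_keys_iff lookup_drop_apex split: if_splits)

lemma drop_apex_add_single:
  "drop_apex (m + Poly_Mapping.single s 1) = (if s = 0 then drop_apex m else drop_apex m + Poly_Mapping.single s 1)"
  by (rule poly_mapping_eqI) (simp add: lookup_drop_apex lookup_add lookup_single when_def)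

lemma drop_apex_sqfree: "finite \<sigma> \<Longrightarrow> drop_apex (sqfree \<sigma>) = sqfree (\<sigma> - {0})"
  by (rule poly_mapping_eqI) (simp add: lookup_drop_apex lookup_sqfree)

lemma mdeg_drop_apex: "mdeg m = mdeg (drop_apex m) + Poly_Mapping.lookup m 0"
proof -
  have "m = drop_apex m + Poly_Mapping.single 0 (Poly_Mapping.lookup m 0)"
    by (rule poly_mapping_eqI) (simp add: lookup_drop_apex lookup_add lookup_single when_def)
  then show ?thesis
    by (metis mdeg_add mdeg_single)
qed

lemma monomial_weight_add_single:
  assumes "s \<in> {1..n}"
  shows "monomial_weight n a (m + Poly_Mapping.single s 1) = monomial_weight n a m * inv_one_plus a s"
proof -
  have "monomial_weight n a (m + Poly_Mapping.single s 1) =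
      (\<Prod>r\<in>{1..n}. inv_one_plus a r ^ Poly_Mapping.lookup m r * (if r = s then inv_one_plus a r else 1))"
    unfolding monomial_weight_def by (intro prod.cong) (auto simp: lookup_add lookup_single)
  then show ?thesis
    using assms by (simp add: prod.distrib monomial_weight_def)
qed

lemma monomial_weight_add_apex: "monomial_weight n a (m + Poly_Mapping.single 0 1) = monomial_weight n a m"
  unfolding monomial_weight_def by (intro prod.cong) (auto simp: lookup_add lookup_single)

lemma monomial_weight_nonzero: "\<forall>s\<in>{1..n}. 1 + a s \<noteq> 0 \<Longrightarrow> monomial_weight n a m \<noteq> 0"
  by (simp add: monomial_weight_def inv_one_plus_def)

lemma cone_stress_add: "cone_stress n a (\<lambda>m. \<omega> m + \<omega>' m) = (\<lambda>m. cone_stress n a \<omega> m + cone_stress n a \<omega>' m)"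
  by (rule ext) (simp add: cone_stress_def Let_def funpow_dderiv_add algebra_simps)

lemma cone_stress_cmult: "cone_stress n a (\<lambda>m. c * \<omega> m) = (\<lambda>m. c * cone_stress n a \<omega> m)"
  by (rule ext) (simp add: cone_stress_def Let_def funpow_dderiv_cmult algebra_simps)

lemma cone_stress_sqfree:
  "finite \<sigma> \<Longrightarrow> cone_stress n a \<omega> (sqfree \<sigma>) = monomial_weight n a (sqfree \<sigma>) *
     (if 0 \<in> \<sigma> then - dderiv {1..n} (inv_one_plus a) \<omega> (sqfree (\<sigma> - {0})) else \<omega> (sqfree \<sigma>))"
  by (simp add: cone_stress_def lookup_sqfree drop_apex_sqfree)

lemma cone_stress_add_single:
  assumes "s \<in> {1..n}" and "Poly_Mapping.lookup m 0 = k"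
  shows "cone_stress n a \<omega> (m + Poly_Mapping.single s 1) = (-1) ^ k / fact k * monomial_weight n a m *
    inv_one_plus a s * (dderiv {1..n} (inv_one_plus a) ^^ k) \<omega> (drop_apex m + Poly_Mapping.single s 1)"
proof -
  have "Poly_Mapping.lookup (m + Poly_Mapping.single s 1) 0 = k"
    using assms by (simp add: lookup_add lookup_single)
  then show ?thesis
    using assms(1)
    unfolding cone_stress_def Let_def drop_apex_add_single monomial_weight_add_single[OF assms(1)]
    by (simp add: mult_ac)
qed

lemma cone_stress_add_apex:
  assumes "Poly_Mapping.lookup m 0 = k"
  shows "cone_stress n a \<omega> (m + Poly_Mapping.single 0 1) = - ((-1) ^ k / fact k) * monomial_weight n a m /
    of_nat (Suc k) * (dderiv {1..n} (inv_one_plus a) ^^ Suc k) \<omega> (drop_apex m)"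
proof -
  have "Poly_Mapping.lookup (m + Poly_Mapping.single 0 1) 0 = Suc k"
    using assms by (simp add: lookup_add)
  moreover have "((-1) ^ Suc k / fact (Suc k) :: real) = - ((-1) ^ k / fact k) / of_nat (Suc k)"
    by (simp add: field_simps)
  ultimately show ?thesis
    unfolding cone_stress_def Let_def drop_apex_add_single monomial_weight_add_apex
    by (simp add: mult_ac)
qed

(* The apex terms of \<partial>_l telescope against the next term of the exponential series. *)
lemma dderiv_cone_stress:
  fixes l :: "nat \<Rightarrow> real" and m :: "nat monomial"
  defines "k \<equiv> Poly_Mapping.lookup m 0"
  shows "dderiv {0..n} l (cone_stress n a \<omega>) m = ((-1) ^ k / fact k) * monomial_weight n a m *
    dderiv {1..n} (\<lambda>s. (l s - l 0) * inv_one_plus a s) ((dderiv {1..n} (inv_one_plus a) ^^ k) \<omega>) (drop_apex m)"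
proof -
  let ?e = "\<lambda>v. Poly_Mapping.single v (1::nat)"
  let ?b = "inv_one_plus a"
  define G where "G = (dderiv {1..n} ?b ^^ k) \<omega>"
  define C where "C = ((-1) ^ k / fact k) * monomial_weight n a m"
  define X where "X s = ?b s * (of_nat (Poly_Mapping.lookup m s) + 1) * G (drop_apex m + ?e s)" for s
  have k: "Poly_Mapping.lookup m 0 = k"
    by (simp add: k_def)
  have lookup_m: "Poly_Mapping.lookup (drop_apex m) s = Poly_Mapping.lookup m s" if "s \<in> {1..n}" for s
    using that by (simp add: lookup_drop_apex)
  have "(dderiv {1..n} ?b ^^ Suc k) \<omega> (drop_apex m) = (\<Sum>s\<in>{1..n}. X s)"
    unfolding X_def G_def by (simp add: dderiv_def lookup_m)
  then have apex: "cone_stress n a \<omega> (m + ?e 0) = - C / of_nat (Suc k) * (\<Sum>s\<in>{1..n}. X s)"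
    using cone_stress_add_apex[OF k] by (simp add: C_def)
  have base: "cone_stress n a \<omega> (m + ?e s) = C * G (drop_apex m + ?e s) * ?b s" if "s \<in> {1..n}" for s
    using cone_stress_add_single[OF that k] by (simp add: C_def G_def mult_ac)
  have "dderiv {0..n} l (cone_stress n a \<omega>) m = l 0 * (of_nat k + 1) * cone_stress n a \<omega> (m + ?e 0)
      + (\<Sum>s\<in>{1..n}. l s * (of_nat (Poly_Mapping.lookup m s) + 1) * cone_stress n a \<omega> (m + ?e s))"
    unfolding dderiv_def atLeastAtMost_insertL[symmetric, OF le0] by (simp add: k)
  also have "\<dots> = l 0 * (of_nat k + 1) * (- C / of_nat (Suc k) * (\<Sum>s\<in>{1..n}. X s))
      + (\<Sum>s\<in>{1..n}. l s * (of_nat (Poly_Mapping.lookup m s) + 1) * (C * G (drop_apex m + ?e s) * ?b s))"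
    by (simp only: apex base cong: sum.cong)
  also have "\<dots> = - (l 0 * C * (\<Sum>s\<in>{1..n}. X s)) + (\<Sum>s\<in>{1..n}. C * (l s * X s))"
    unfolding X_def by (simp add: field_simps)
  also have "\<dots> = C * (\<Sum>s\<in>{1..n}. (l s - l 0) * X s)"
    by (simp add: sum_distrib_left sum_subtractf algebra_simps)
  also have "\<dots> = C * dderiv {1..n} (\<lambda>s. (l s - l 0) * ?b s) G (drop_apex m)"
    unfolding dderiv_def X_def by (simp add: lookup_m mult_ac)
  finally show ?thesis
    unfolding C_def G_def .
qed

lemma cone_stress_in_subfield:
  assumes F: "is_subfield F" and "\<forall>s\<in>{1..n}. a s \<in> F" and "\<forall>m. \<omega> m \<in> F"
  shows "cone_stress n a \<omega> m \<in> F"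
proof -
  have b: "\<forall>s\<in>{1..n}. inv_one_plus a s \<in> F"
    using assms(2) by (simp add: inv_one_plus_def subfield_inverse[OF F] subfield_add[OF F] subfield_one[OF F])
  have sign: "((-1) ^ k / fact k :: real) \<in> F" for k
    using subfield_divide[OF F subfield_power[OF F subfield_uminus[OF F subfield_one[OF F]]]
        subfield_of_nat[OF F, of "fact k"]]
    by simp
  have weight: "monomial_weight n a m \<in> F"
    unfolding monomial_weight_def using b by (intro subfield_prod[OF F] subfield_power[OF F]) auto
  show ?thesis
    unfolding cone_stress_def Let_def
    by (intro subfield_mult[OF F] sign weight funpow_dderiv_in_subfield[OF F b assms(3)])
qed

lemma mem_cone: "\<tau> \<in> cone v L \<longleftrightarrow> \<tau> \<in> L \<or> (\<exists>\<sigma>\<in>L. \<tau> = insert v \<sigma>)"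
  unfolding cone_def by blast

lemma mem_cone_iff:
  assumes down: "\<forall>\<sigma>\<in>L. \<forall>\<tau>. \<tau> \<subseteq> \<sigma> \<longrightarrow> \<tau> \<in> L"
  shows "\<tau> \<in> cone v L \<longleftrightarrow> \<tau> - {v} \<in> L"
proof
  assume "\<tau> \<in> cone v L"
  then obtain \<sigma> where "\<sigma> \<in> L" "\<tau> - {v} \<subseteq> \<sigma>"
    unfolding mem_cone by blast
  then show "\<tau> - {v} \<in> L"
    using down by blast
next
  assume "\<tau> - {v} \<in> L"
  then show "\<tau> \<in> cone v L"
  proof (cases "v \<in> \<tau>")
    case True
    then have "\<tau> = insert v (\<tau> - {v})"
      by auto
    with \<open>\<tau> - {v} \<in> L\<close> show ?thesis
      unfolding mem_cone by blast
  qed (simp add: mem_cone)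
qed

lemma cone_stress_support:
  assumes "simplicial_complex W \<Lambda>"
    and "\<forall>m. \<omega> m \<noteq> 0 \<longrightarrow> mdeg m = i \<and> Poly_Mapping.keys m \<in> \<Lambda>"
    and "cone_stress n a \<omega> m \<noteq> 0"
  shows "mdeg m = i \<and> Poly_Mapping.keys m \<in> cone 0 \<Lambda>"
proof -
  have down: "\<forall>\<sigma>\<in>\<Lambda>. \<forall>\<tau>. \<tau> \<subseteq> \<sigma> \<longrightarrow> \<tau> \<in> \<Lambda>"
    using assms(1) unfolding simplicial_complex_def by blast
  have "(dderiv {1..n} (inv_one_plus a) ^^ Poly_Mapping.lookup m 0) \<omega> (drop_apex m) \<noteq> 0"
    using assms(3) by (auto simp: cone_stress_def Let_def)
  then have "mdeg (drop_apex m) + Poly_Mapping.lookup m 0 = i \<and> Poly_Mapping.keys (drop_apex m) \<in> \<Lambda>"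
    by (rule funpow_dderiv_support[OF assms(2) down])
  then show ?thesis
    using mdeg_drop_apex[of m] keys_drop_apex[of m] mem_cone_iff[OF down] by simp
qed

lemma cone_stress_affine_stress:
  assumes "simplicial_complex {1..n} \<Lambda>"
    and F: "is_subfield F" and "F' \<subseteq> F" and "\<forall>s\<in>{1..n}. a s \<in> F"
    and nz: "\<forall>s\<in>{1..n}. 1 + a s \<noteq> 0"
    and lift_last: "\<forall>s\<in>{1..n}. p s d - p 0 d = 1 + a s"
    and lift: "\<forall>s\<in>{1..n}. \<forall>t\<in>{1..d-1}. p s t - p 0 t = (1 + a s) * p' s t"
    and \<omega>: "\<omega> \<in> affine_stresses {1..n} \<Lambda> (d - 1) p' F' i"
  shows "cone_stress n a \<omega> \<in> affine_stresses {0..n} (cone 0 \<Lambda>) d p F i"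
proof -
  let ?D = "dderiv {1..n} (inv_one_plus a)"
  have \<omega>F: "\<forall>m. \<omega> m \<in> F"
    and \<omega>S: "\<forall>m. \<omega> m \<noteq> 0 \<longrightarrow> mdeg m = i \<and> Poly_Mapping.keys m \<in> \<Lambda>"
    and \<omega>L: "\<forall>t\<in>{1..d-1}. dderiv {1..n} (\<lambda>v. p' v t) \<omega> = (\<lambda>m. 0)"
    and \<omega>A: "dderiv {1..n} (\<lambda>v. 1) \<omega> = (\<lambda>m. 0)"
    using \<omega> \<open>F' \<subseteq> F\<close> unfolding affine_stresses_def affine_stress_def linear_stress_def by auto
  have linear: "dderiv {0..n} (\<lambda>v. p v t) (cone_stress n a \<omega>) = (\<lambda>m. 0)" if "t \<in> {1..d}" for t
  proof -
    have "dderiv {1..n} (\<lambda>s. (p s t - p 0 t) * inv_one_plus a s) =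
        dderiv {1..n} (if t = d then (\<lambda>v. 1) else (\<lambda>v. p' v t))"
      using that lift_last lift nz by (intro dderiv_cong) (auto simp: inv_one_plus_def)
    moreover have "dderiv {1..n} (if t = d then (\<lambda>v. 1) else (\<lambda>v. p' v t)) ((?D ^^ k) \<omega>) = (\<lambda>m. 0)" for k
      using that \<omega>L \<omega>A by (auto intro: dderiv_funpow_eq_0)
    ultimately show ?thesis
      by (intro ext) (simp add: dderiv_cone_stress)
  qed
  have "dderiv {0..n} (\<lambda>v. 1) (cone_stress n a \<omega>) m = 0" for m
    unfolding dderiv_cone_stress by (simp add: dderiv_def)
  then have "dderiv {0..n} (\<lambda>v. 1) (cone_stress n a \<omega>) = (\<lambda>m. 0)"
    by (simp add: fun_eq_iff)
  with linear show ?thesis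
    unfolding affine_stresses_def affine_stress_def linear_stress_def
    using cone_stress_in_subfield[OF F assms(4) \<omega>F] cone_stress_support[OF assms(1) \<omega>S] by blast
qed

section \<open>Support of the coning map\<close>

lemma supp_down_closed: "\<forall>\<sigma>\<in>supp i \<omega>. \<forall>\<tau>. \<tau> \<subseteq> \<sigma> \<longrightarrow> \<tau> \<in> supp i \<omega>"
  unfolding supp_def by blast

locale generic_cone_setting =
  fixes n d i :: nat and \<Lambda> :: "nat set set" and p' :: "nat \<Rightarrow> nat \<Rightarrow> real"
    and a :: "nat \<Rightarrow> real" and F' :: "real set" and \<omega> :: "nat monomial \<Rightarrow> real"
  assumes complex: "simplicial_complex {1..n} \<Lambda>"
    and generic_p': "alg_indep \<rat> ({1..n} \<times> {1..d-1}) (\<lambda>(s, t). p' s t)"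
    and generic_a: "alg_indep F' {1..n} a"
    and subfield: "is_subfield F'"
    and stress: "\<omega> \<in> affine_stresses {1..n} \<Lambda> (d - 1) p' F' i"
    and degree: "i \<le> d + 1"
begin

lemma one_plus_nonzero: "\<forall>s\<in>{1..n}. 1 + a s \<noteq> 0"
  using prod_one_plus_nonzero[OF generic_a subfield] by simp

lemma face_of_stress:
  assumes "finite \<sigma>" and "\<omega> (sqfree \<sigma>) \<noteq> 0"
  shows "\<sigma> \<subseteq> {1..n}"
proof -
  have "Poly_Mapping.keys (sqfree \<sigma>) \<in> \<Lambda>"
    using stress assms(2) unfolding affine_stresses_def affine_stress_def linear_stress_def by blast
  then show ?thesis
    using complex keys_sqfree[OF assms(1)] unfolding simplicial_complex_def by auto
qed

(* With c_v = (\<mu>_v + 1) \<omega>_{\<mu>+v}, the stress equations read \<Sum>_v c_v (1, p'(v)) = 0;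
   if c vanishes off the at most d vertices of \<mu>, affine independence kills it. *)
lemma stress_extensions_vanish:
  assumes card: "card (Poly_Mapping.keys \<mu>) \<le> d"
    and off: "\<forall>v\<in>{1..n} - Poly_Mapping.keys \<mu>. \<omega> (\<mu> + Poly_Mapping.single v 1) = 0"
  shows "\<forall>v\<in>{1..n}. \<omega> (\<mu> + Poly_Mapping.single v 1) = 0"
proof -
  have \<omega>L: "\<forall>t\<in>{1..d-1}. dderiv {1..n} (\<lambda>v. p' v t) \<omega> = (\<lambda>m. 0)"
    and \<omega>A: "dderiv {1..n} (\<lambda>v. 1) \<omega> = (\<lambda>m. 0)"
    using stress unfolding affine_stresses_def affine_stress_def linear_stress_def by auto
  define c where "c v = (of_nat (Poly_Mapping.lookup \<mu> v) + 1) * \<omega> (\<mu> + Poly_Mapping.single v 1)" for v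
  let ?\<tau> = "Poly_Mapping.keys \<mu> \<inter> {1..n}"
  have restrict: "(\<Sum>v\<in>{1..n}. g v * c v) = (\<Sum>v\<in>?\<tau>. g v * c v)" for g :: "nat \<Rightarrow> real"
    using off by (intro sum.mono_neutral_right) (auto simp: c_def)
  have sum0: "(\<Sum>v\<in>?\<tau>. c v) = 0"
    using fun_cong[OF \<omega>A, of \<mu>] restrict[of "\<lambda>_. 1"] by (simp add: dderiv_def c_def mult_ac)
  have coords: "\<forall>t\<in>{1..d-1}. (\<Sum>v\<in>?\<tau>. c v * p' v t) = 0"
    using fun_cong[OF \<omega>L[rule_format], of _ \<mu>] restrict by (simp add: dderiv_def c_def mult_ac)
  have card_\<tau>: "card ?\<tau> \<le> d - 1 + 1"
    using card card_mono[of "Poly_Mapping.keys \<mu>" ?\<tau>] by auto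
  have "\<forall>v\<in>?\<tau>. c v = 0"
    using affine_indep_generic[OF generic_p' _ Int_lower2 card_\<tau> sum0 coords] by simp
  with off show ?thesis
    by (auto simp: c_def)
qed

lemma dderiv_inv_one_plus_nonzero_iff:
  assumes card: "card (Poly_Mapping.keys \<mu>) \<le> d"
  shows "dderiv {1..n} (inv_one_plus a) \<omega> \<mu> \<noteq> 0 \<longleftrightarrow>
    (\<exists>v\<in>{1..n} - Poly_Mapping.keys \<mu>. \<omega> (\<mu> + Poly_Mapping.single v 1) \<noteq> 0)"
proof -
  define c where "c v = (of_nat (Poly_Mapping.lookup \<mu> v) + 1) * \<omega> (\<mu> + Poly_Mapping.single v 1)" for v
  have D: "dderiv {1..n} (inv_one_plus a) \<omega> \<mu> = (\<Sum>v\<in>{1..n}. c v * inverse (1 + a v))"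
    unfolding dderiv_def c_def inv_one_plus_def by (simp add: mult_ac)
  have c_zero_iff: "c v = 0 \<longleftrightarrow> \<omega> (\<mu> + Poly_Mapping.single v 1) = 0" for v
    unfolding c_def by simp
  show ?thesis
  proof
    assume nonzero: "dderiv {1..n} (inv_one_plus a) \<omega> \<mu> \<noteq> 0"
    show "\<exists>v\<in>{1..n} - Poly_Mapping.keys \<mu>. \<omega> (\<mu> + Poly_Mapping.single v 1) \<noteq> 0"
    proof (rule ccontr)
      assume "\<not> ?thesis"
      then have "\<forall>v\<in>{1..n}. c v = 0"
        using stress_extensions_vanish[OF card] c_zero_iff by blast
      with nonzero show False
        unfolding D by simp
    qed
  next
    assume "\<exists>v\<in>{1..n} - Poly_Mapping.keys \<mu>. \<omega> (\<mu> + Poly_Mapping.single v 1) \<noteq> 0"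
    then obtain v where v: "v \<in> {1..n}" "c v \<noteq> 0"
      using c_zero_iff by blast
    have "\<forall>m. \<omega> m \<in> F'"
      using stress unfolding affine_stresses_def affine_stress_def linear_stress_def by auto
    then have cF': "\<forall>v\<in>{1..n}. c v \<in> F'"
      unfolding c_def
      by (intro ballI subfield_mult[OF subfield] subfield_add[OF subfield] subfield_of_nat[OF subfield]
          subfield_one[OF subfield]) simp
    show "dderiv {1..n} (inv_one_plus a) \<omega> \<mu> \<noteq> 0"
    proof
      assume "dderiv {1..n} (inv_one_plus a) \<omega> \<mu> = 0"
      then have "\<forall>v\<in>{1..n}. c v = 0"
        using lin_indep_inverse_one_plus[OF generic_a subfield _ cF'] D by simp
      with v show False
        by blast
    qed
  qed
qed

lemma cone_stress_base_nonzero_iff: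
  "finite \<sigma> \<Longrightarrow> 0 \<notin> \<sigma> \<Longrightarrow> cone_stress n a \<omega> (sqfree \<sigma>) \<noteq> 0 \<longleftrightarrow> \<omega> (sqfree \<sigma>) \<noteq> 0"
  using monomial_weight_nonzero[OF one_plus_nonzero] by (simp add: cone_stress_sqfree)

lemma cone_stress_apex_nonzero_iff:
  assumes \<rho>: "finite \<rho>" "0 \<notin> \<rho>" "card \<rho> < i"
  shows "cone_stress n a \<omega> (sqfree (insert 0 \<rho>)) \<noteq> 0 \<longleftrightarrow> (\<exists>v\<in>{1..n} - \<rho>. \<omega> (sqfree (insert v \<rho>)) \<noteq> 0)"
proof -
  have "cone_stress n a \<omega> (sqfree (insert 0 \<rho>)) \<noteq> 0 \<longleftrightarrow> dderiv {1..n} (inv_one_plus a) \<omega> (sqfree \<rho>) \<noteq> 0"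
    using \<rho> monomial_weight_nonzero[OF one_plus_nonzero] by (simp add: cone_stress_sqfree Diff_insert_absorb)
  also have "\<dots> \<longleftrightarrow> (\<exists>v\<in>{1..n} - \<rho>. \<omega> (sqfree \<rho> + Poly_Mapping.single v 1) \<noteq> 0)"
    using dderiv_inv_one_plus_nonzero_iff[of "sqfree \<rho>"] \<rho> degree by (simp add: keys_sqfree)
  also have "\<dots> \<longleftrightarrow> (\<exists>v\<in>{1..n} - \<rho>. \<omega> (sqfree (insert v \<rho>)) \<noteq> 0)"
    using \<rho>(1) by (intro bex_cong refl) (simp add: sqfree_insert)
  finally show ?thesis .
qed

lemma supp_cone_stress_subset: "supp i (cone_stress n a \<omega>) \<subseteq> skel_card i (cone 0 (supp i \<omega>))"
proof
  fix \<tau> assume "\<tau> \<in> supp i (cone_stress n a \<omega>)"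
  then obtain \<sigma> where \<sigma>: "finite \<sigma>" "card \<sigma> = i" "cone_stress n a \<omega> (sqfree \<sigma>) \<noteq> 0" "\<tau> \<subseteq> \<sigma>"
    unfolding supp_def by blast
  have "\<tau> - {0} \<in> supp i \<omega>"
  proof (cases "0 \<in> \<sigma>")
    case True
    define \<rho> where "\<rho> = \<sigma> - {0}"
    have \<rho>: "finite \<rho>" "0 \<notin> \<rho>" "card \<rho> < i" "\<sigma> = insert 0 \<rho>"
      using \<sigma>(1,2) True card_Diff1_less[OF \<sigma>(1) True] by (auto simp: \<rho>_def)
    then have "\<exists>v\<in>{1..n} - \<rho>. \<omega> (sqfree (insert v \<rho>)) \<noteq> 0"
      using \<sigma>(3) cone_stress_apex_nonzero_iff[of \<rho>] by simp
    then obtain v where v: "v \<in> {1..n} - \<rho>" "\<omega> (sqfree (insert v \<rho>)) \<noteq> 0"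
      by blast
    have "card (insert v \<rho>) = i"
      using \<rho> v(1) \<sigma>(2) by simp
    moreover have "\<tau> - {0} \<subseteq> insert v \<rho>"
      using \<sigma>(4) \<rho>(4) by blast
    ultimately show ?thesis
      unfolding supp_def using \<rho>(1) v(2) by blast
  next
    case False
    then have "\<omega> (sqfree \<sigma>) \<noteq> 0"
      using cone_stress_base_nonzero_iff[OF \<sigma>(1)] \<sigma>(3) by simp
    then show ?thesis
      unfolding supp_def using \<sigma> by blast
  qed
  moreover have "card \<tau> \<le> i"
    using card_mono[OF \<sigma>(1,4)] \<sigma>(2) by simp
  ultimately show "\<tau> \<in> skel_card i (cone 0 (supp i \<omega>))"
    unfolding skel_card_def mem_cone_iff[OF supp_down_closed] by blast
qed

lemma skel_cone_supp_subset: "skel_card i (cone 0 (supp i \<omega>)) \<subseteq> supp i (cone_stress n a \<omega>)"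
proof
  fix \<tau> assume "\<tau> \<in> skel_card i (cone 0 (supp i \<omega>))"
  then have card_\<tau>: "card \<tau> \<le> i" and "\<tau> - {0} \<in> supp i \<omega>"
    unfolding skel_card_def mem_cone_iff[OF supp_down_closed] by auto
  then obtain \<sigma> where \<sigma>: "finite \<sigma>" "card \<sigma> = i" "\<omega> (sqfree \<sigma>) \<noteq> 0" "\<tau> - {0} \<subseteq> \<sigma>"
    unfolding supp_def by blast
  have "0 \<notin> \<sigma>"
    using face_of_stress[OF \<sigma>(1,3)] by auto
  show "\<tau> \<in> supp i (cone_stress n a \<omega>)"
  proof (cases "0 \<in> \<tau>")
    case True
    have "finite (\<tau> - {0})"
      using finite_subset[OF \<sigma>(4,1)] .
    then have "finite \<tau>"
      by simp
    then have "card (\<tau> - {0}) < card \<sigma>"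
      using card_Diff1_less[OF \<open>finite \<tau>\<close> True] card_\<tau> \<sigma>(2) by linarith
    then have "\<not> \<sigma> \<subseteq> \<tau> - {0}"
      using card_mono[OF \<open>finite (\<tau> - {0})\<close>] by (meson leD)
    then obtain v where v: "v \<in> \<sigma>" "v \<notin> \<tau>"
      using \<open>0 \<notin> \<sigma>\<close> by blast
    define \<rho> where "\<rho> = \<sigma> - {v}"
    have \<rho>: "finite \<rho>" "0 \<notin> \<rho>" "card \<rho> < i"
      using \<sigma>(1,2) \<open>0 \<notin> \<sigma>\<close> card_Diff1_less[OF \<sigma>(1) v(1)] by (auto simp: \<rho>_def)
    have "v \<in> {1..n} - \<rho>" and "insert v \<rho> = \<sigma>"
      using face_of_stress[OF \<sigma>(1,3)] v(1) by (auto simp: \<rho>_def)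
    then have "\<exists>u\<in>{1..n} - \<rho>. \<omega> (sqfree (insert u \<rho>)) \<noteq> 0"
      using \<sigma>(3) by auto
    then have "cone_stress n a \<omega> (sqfree (insert 0 \<rho>)) \<noteq> 0"
      by (simp only: cone_stress_apex_nonzero_iff[OF \<rho>])
    moreover have "card (insert 0 \<rho>) = i"
      using \<rho> \<sigma>(1,2) v(1) by (simp add: \<rho>_def)
    moreover have "\<tau> \<subseteq> insert 0 \<rho>"
      using \<sigma>(4) v(2) by (auto simp: \<rho>_def)
    ultimately show ?thesis
      unfolding supp_def using \<rho>(1) by blast
  next
    case False
    then have "\<tau> \<subseteq> \<sigma>"
      using \<sigma>(4) by blast
    moreover have "cone_stress n a \<omega> (sqfree \<sigma>) \<noteq> 0"
      using cone_stress_base_nonzero_iff[OF \<sigma>(1) \<open>0 \<notin> \<sigma>\<close>] \<sigma>(3) by simp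
    ultimately show ?thesis
      unfolding supp_def using \<sigma>(1,2) by blast
  qed
qed

lemma supp_cone_stress: "supp i (cone_stress n a \<omega>) = skel_card i (cone 0 (supp i \<omega>))"
  using supp_cone_stress_subset skel_cone_supp_subset by (rule subset_antisym)

end

theorem lemma3p2:
  fixes d n :: nat
    and \<Lambda> :: "nat set set"
    and p' :: "nat \<Rightarrow> nat \<Rightarrow> real"
    and a :: "nat \<Rightarrow> real"
    and F :: "real set"
  assumes "d \<ge> 1"
    and "simplicial_complex {1..n} \<Lambda>"
    and "dim_eq \<Lambda> (int d - 2)"
    and "alg_indep \<rat> ({1..n} \<times> {1..d-1}) (\<lambda>(s, t). p' s t)"
    and "alg_indep (gen_field {p' s t | s t. s \<in> {1..n} \<and> t \<in> {1..d-1}}) {1..n} a"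
    and "is_subfield F"
    and "gen_field ({p' s t | s t. s \<in> {1..n} \<and> t \<in> {1..d-1}} \<union> a ` {1..n}) \<subseteq> F"
  shows "let F' = gen_field {p' s t | s t. s \<in> {1..n} \<and> t \<in> {1..d-1}};
             \<Gamma> = cone 0 \<Lambda>;
             p = (\<lambda>s t. if s = 0 then (if t = d then -1 else 0)
                         else (if t = d then a s else (1 + a s) * p' s t))
         in \<forall>i \<le> (d - 1) div 2.
              \<exists>\<psi>. (\<forall>\<omega>\<in>affine_stresses {1..n} \<Lambda> (d - 1) p' F' i.
                       \<psi> \<omega> \<in> affine_stresses {0..n} \<Gamma> d p F i) \<and>
                  (\<forall>\<omega>\<in>affine_stresses {1..n} \<Lambda> (d - 1) p' F' i.
                     \<forall>\<omega>'\<in>affine_stresses {1..n} \<Lambda> (d - 1) p' F' i.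
                       \<psi> (\<lambda>m. \<omega> m + \<omega>' m) = (\<lambda>m. \<psi> \<omega> m + \<psi> \<omega>' m)) \<and>
                  (\<forall>c\<in>F'. \<forall>\<omega>\<in>affine_stresses {1..n} \<Lambda> (d - 1) p' F' i.
                       \<psi> (\<lambda>m. c * \<omega> m) = (\<lambda>m. c * \<psi> \<omega> m)) \<and>
                  (\<forall>\<omega>\<in>affine_stresses {1..n} \<Lambda> (d - 1) p' F' i.
                       supp i (\<psi> \<omega>) = skel_card i (cone 0 (supp i \<omega>)))"
proof -
  define P' where "P' = {p' s t | s t. s \<in> {1..n} \<and> t \<in> {1..d-1}}"
  define p where "p = (\<lambda>s t. if s = 0 then (if t = d then -1 else 0)
                         else (if t = d then a s else (1 + a s) * p' s t))"
  have F': "is_subfield (gen_field P')"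
    by (rule is_subfield_gen_field)
  have generic_a: "alg_indep (gen_field P') {1..n} a"
    using assms(5) unfolding P'_def .
  have "P' \<union> a ` {1..n} \<subseteq> F"
    using subset_gen_field[of "P' \<union> a ` {1..n}"] assms(7) unfolding P'_def by (rule subset_trans)
  then have "gen_field P' \<subseteq> F" and "\<forall>s\<in>{1..n}. a s \<in> F"
    using gen_field_least[OF assms(6), of P'] by auto
  moreover have "\<forall>s\<in>{1..n}. 1 + a s \<noteq> 0"
    using prod_one_plus_nonzero[OF generic_a F'] by simp
  moreover have "\<forall>s\<in>{1..n}. p s d - p 0 d = 1 + a s"
    and "\<forall>s\<in>{1..n}. \<forall>t\<in>{1..d-1}. p s t - p 0 t = (1 + a s) * p' s t"
    by (auto simp: p_def)
  ultimately have stress: "cone_stress n a \<omega> \<in> affine_stresses {0..n} (cone 0 \<Lambda>) d p F i"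
    if "\<omega> \<in> affine_stresses {1..n} \<Lambda> (d - 1) p' (gen_field P') i" for i \<omega>
    using cone_stress_affine_stress[OF assms(2,6)] that by blast
  have supp: "supp i (cone_stress n a \<omega>) = skel_card i (cone 0 (supp i \<omega>))"
    if "i \<le> (d - 1) div 2" "\<omega> \<in> affine_stresses {1..n} \<Lambda> (d - 1) p' (gen_field P') i" for i \<omega>
  proof -
    have "i \<le> d + 1"
      using that(1) by linarith
    then interpret generic_cone_setting n d i \<Lambda> p' a "gen_field P'" \<omega>
      by (intro generic_cone_setting.intro[OF assms(2,4) generic_a F' that(2)])
    show ?thesis
      by (rule supp_cone_stress)
  qed
  show ?thesis
    unfolding Let_def P'_def[symmetric] p_def[symmetric]
    by (intro allI impI exI[of _ "cone_stress n a"] conjI ballI)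
      (simp_all add: stress supp cone_stress_add cone_stress_cmult)
qed

end
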